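(* Let $\{\alpha(t)\}_{t\ge 0}$ be any non-negative, non-increasing stepsize sequence and $\eta>0$, and run the distributed regularized primal-dual algorithm described in the context. Then for every $T\in\mathbb{N}$ and every agent $i\in\{1,\dots,n\}$, \[ f(\widehat{x}_{i}(T))-f(x_{\ast})\leq \frac{1}{\sum_{t=0}^{T-1}\alpha(t)}\Bigg[\frac{1}{2}\|x_{\ast}\|^{2} +\frac{L}{n}\sum_{t=0}^{T-1}\sum_{j=1}^{n}\alpha(t)\|x_{i}(t)-x_{j}(t)\|-\frac{\eta}{2n}\sum_{t=0}^{T-1}\sum_{j=1}^{n}\alpha(t)\|\lambda_{j}(t)\|^{2} +\frac{1}{2n}\sum_{t=0}^{T-1}\sum_{j=1}^{n}\alpha^{2}(t)\Big(\|\nabla_{x}L_{j}(x_{j}(t),\lambda_{j}(t))\|^{2}+\|\nabla_{\lambda}L_{j}(x_{j}(t),\lambda_{j}(t))\|^{2}\Big)\Bigg]. \]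
   Context: Norms are Euclidean. Problem: minimize $f(x)=\frac1n\sum_{i=1}^n f_i(x)$ over $\mathcal{X}=\{x\in\mathbb{R}^d: g_k(x)\le 0,\ k=1,\dots,m\}$; write $g=(g_1,\dots,g_m)^T$. Assumptions: $\mathcal{X}$ is non-empty, convex and compact; $R$ is the smallest radius with $\mathcal{X}\subseteq \mathbb{B}_d(R)=\{x:\|x\|\le R\}$; there is a Slater vector $\tilde x$ with $g_k(\tilde x)<0$ for all $k$; all $f_i$ and $g_k$ are convex on $\mathbb{B}_d(R)$ and all their subgradients there satisfy $\|\nabla f_i(x)\|\le L$, $\|\nabla g_k(x)\|\le L$. $x_\ast$ denotes an optimal solution. Agents $1,\dots,n$ are nodes of a connected graph $G=(V,E)$; $W\in\mathbb{R}^{n\times n}$ is doubly stochastic with $W_{ij}>0$ if $(i,j)\in E$ and $W_{ij}=0$ if $(i,j)\notin E$. Regularized Lagrangian of agent $i$: $L_i(x,\lambda)=f_i(x)+\langle\lambda,g(x)\rangle-\frac{\eta}{2}\|\lambda\|^2$, with subgradients $\nabla_xL_i(x,\lambda)=\nabla f_i(x)+\sum_{k=1}^m\lambda_k\nabla g_k(x)$ and $\nabla_\lambda L_i(x,\lambda)=g(x)-\eta\lambda$ (for subgradients $\nabla f_i(x)\in\partial f_i(x)$, $\nabla g_k(x)\in\partial g_k(x)$). Algorithm: $x_i(0)=0\in\mathbb{R}^d$, $\lambda_i(0)=0\in\mathbb{R}^m$; for $t=0,1,2,\dots$: $y_i(t)=x_i(t)-\alpha(t)\nabla_xL_i(x_i(t),\lambda_i(t))$,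 $\gamma_i(t)=\lambda_i(t)+\alpha(t)\nabla_\lambda L_i(x_i(t),\lambda_i(t))$, $x_i(t+1)=\Pi_{\mathbb{B}_d(R)}(\sum_j W_{ij}y_j(t))$, $\lambda_i(t+1)=\Pi_{\mathbb{R}^m_+}(\sum_jW_{ij}\gamma_j(t))$, where $\Pi$ denotes Euclidean projection. The estimate is $\widehat{x}_i(T)=\sum_{t=0}^{T-1}\alpha(t)x_i(t)/\sum_{t=0}^{T-1}\alpha(t)$. *)

theory Defs
  imports "HOL-Analysis.Analysis"
begin

text \<open>v is a subgradient of the function h at x, relative to the set S
  (the functions are only assumed convex on S = the ball of radius R).\<close>
definition is_subgrad_on :: "'a::real_inner set \<Rightarrow> ('a \<Rightarrow> real) \<Rightarrow> 'a \<Rightarrow> 'a \<Rightarrow> bool" where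
  "is_subgrad_on S h x v \<longleftrightarrow> (\<forall>y\<in>S. h y \<ge> h x + inner v (y - x))"

definition gvec :: "('m::finite \<Rightarrow> 'a \<Rightarrow> real) \<Rightarrow> 'a \<Rightarrow> real^'m" where
  "gvec g x = (\<chi> k. g k x)"

definition gradLx :: "('n \<Rightarrow> 'a \<Rightarrow> 'a::real_vector) \<Rightarrow> ('m::finite \<Rightarrow> 'a \<Rightarrow> 'a)
    \<Rightarrow> 'n \<Rightarrow> 'a \<Rightarrow> real^'m \<Rightarrow> 'a" where
  "gradLx gf gg i x lam = gf i x + (\<Sum>k\<in>UNIV. (lam $ k) *\<^sub>R gg k x)"

definition gradLlam :: "('m::finite \<Rightarrow> 'a \<Rightarrow> real) \<Rightarrow> real \<Rightarrow> 'a \<Rightarrow> real^'m \<Rightarrow> real^'m" where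
  "gradLlam g eta x lam = gvec g x - eta *\<^sub>R lam"

definition nonneg_orthant :: "(real^'m::finite) set" where
  "nonneg_orthant = {v. \<forall>k. 0 \<le> v $ k}"

fun pd_iter :: "('n::finite \<Rightarrow> 'n \<Rightarrow> real) \<Rightarrow> (nat \<Rightarrow> real) \<Rightarrow> real \<Rightarrow> real
    \<Rightarrow> ('n \<Rightarrow> 'a \<Rightarrow> 'a::euclidean_space) \<Rightarrow> ('m::finite \<Rightarrow> 'a \<Rightarrow> real) \<Rightarrow> ('m \<Rightarrow> 'a \<Rightarrow> 'a)
    \<Rightarrow> nat \<Rightarrow> ('n \<Rightarrow> 'a) \<times> ('n \<Rightarrow> real^'m)" where
  "pd_iter W \<alpha> eta R gf g gg 0 = ((\<lambda>i. 0), (\<lambda>i. 0))"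
| "pd_iter W \<alpha> eta R gf g gg (Suc t) =
     (let x = fst (pd_iter W \<alpha> eta R gf g gg t);
          lam = snd (pd_iter W \<alpha> eta R gf g gg t);
          y = (\<lambda>i. x i - \<alpha> t *\<^sub>R gradLx gf gg i (x i) (lam i));
          \<gamma> = (\<lambda>i. lam i + \<alpha> t *\<^sub>R gradLlam g eta (x i) (lam i))
      in ((\<lambda>i. closest_point (cball 0 R) (\<Sum>j\<in>UNIV. W i j *\<^sub>R y j)),
          (\<lambda>i. closest_point nonneg_orthant (\<Sum>j\<in>UNIV. W i j *\<^sub>R \<gamma> j))))"

end

theory Submission
  imports Defs
begin

text \<open>The potential \<open>\<Sum>\<^sub>j \<parallel>x\<^sub>j(t) - x\<^sub>*\<parallel>\<^sup>2 + \<parallel>\<lambda>\<^sub>j(t)\<parallel>\<^sup>2\<close> serves as a Lyapunov function.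
  Projecting onto the ball and onto the orthant does not increase the distance to \<open>x\<^sub>*\<close> and
  to \<open>0\<close>, and averaging with a doubly stochastic \<open>W\<close> does not increase the sum of squared
  distances (Jensen along each row, column sums for the total). Expanding one gradient step of
  agent \<open>j\<close>, the subgradient inequalities at \<open>x\<^sub>*\<close> and the feasibility of \<open>x\<^sub>*\<close> show that the
  potential drops by at least
  \<open>2\<alpha>(f\<^sub>j(x\<^sub>j) - f\<^sub>j(x\<^sub>*)) + 2\<alpha>\<eta>\<parallel>\<lambda>\<^sub>j\<parallel>\<^sup>2 - \<alpha>\<^sup>2(\<parallel>\<nabla>\<^sub>xL\<^sub>j\<parallel>\<^sup>2 + \<parallel>\<nabla>\<^sub>\<lambda>L\<^sub>j\<parallel>\<^sup>2)\<close>,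
  and replacing \<open>f\<^sub>j(x\<^sub>j)\<close> by \<open>f\<^sub>j(x\<^sub>i)\<close> costs \<open>L\<parallel>x\<^sub>i - x\<^sub>j\<parallel>\<close>. Telescoping over \<open>t\<close> and Jensen's
  inequality for \<open>f\<close> at the weighted average of the \<open>x\<^sub>i(t)\<close> give the bound.\<close>

lemma norm_closest_point_diff_le:
  fixes S :: "'a::euclidean_space set"
  assumes "convex S" "closed S" "a \<in> S"
  shows "norm (closest_point S z - a) \<le> norm (z - a)"
  using closest_point_lipschitz[OF assms(1,2), of z a] closest_point_self[OF assms(3)] assms(3)
  by (auto simp: dist_norm)

lemma convex_nonneg_orthant: "convex nonneg_orthant"
  unfolding nonneg_orthant_def convex_def by (auto intro!: add_nonneg_nonneg mult_nonneg_nonneg)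

lemma closed_nonneg_orthant: "closed (nonneg_orthant :: (real^'m::finite) set)"
proof -
  have "nonneg_orthant = {v::real^'m. \<forall>k. v $ k \<in> {0..}}"
    unfolding nonneg_orthant_def by auto
  moreover have "closed {v::real^'m. \<forall>k. v $ k \<in> {0..}}"
    by (rule closed_vector_box) simp
  ultimately show ?thesis by simp
qed

lemma zero_in_nonneg_orthant: "0 \<in> nonneg_orthant"
  by (simp add: nonneg_orthant_def)

lemma power2_norm_convex_comb_le:
  fixes v :: "'b \<Rightarrow> 'a::real_normed_vector"
  assumes "finite A" "\<And>l. l \<in> A \<Longrightarrow> 0 \<le> w l" "sum w A = 1"
  shows "(norm (\<Sum>l\<in>A. w l *\<^sub>R v l))\<^sup>2 \<le> (\<Sum>l\<in>A. w l * (norm (v l))\<^sup>2)"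
proof -
  have "norm (\<Sum>l\<in>A. w l *\<^sub>R v l) \<le> (\<Sum>l\<in>A. norm (w l *\<^sub>R v l))"
    by (rule norm_sum)
  also have "\<dots> = (\<Sum>l\<in>A. w l * norm (v l))"
    using assms(2) by (intro sum.cong) auto
  finally have "(norm (\<Sum>l\<in>A. w l *\<^sub>R v l))\<^sup>2 \<le> (\<Sum>l\<in>A. w l *\<^sub>R norm (v l))\<^sup>2"
    by (intro power_mono) auto
  also have "\<dots> \<le> (\<Sum>l\<in>A. w l * (norm (v l))\<^sup>2)"
    using convex_on_sum[OF assms(1) _ convex_power2, of w "\<lambda>l. norm (v l)"] assms by fastforce
  finally show ?thesis .
qed

lemma sum_power2_dist_closest_point_mix_le:
  fixes W :: "'n::finite \<Rightarrow> 'n \<Rightarrow> real" and v :: "'n \<Rightarrow> 'a::euclidean_space"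
  assumes "convex S" "closed S" "a \<in> S"
    and W_nonneg: "\<And>j l. 0 \<le> W j l"
    and W_rows: "\<And>j. (\<Sum>l\<in>UNIV. W j l) = 1"
    and W_cols: "\<And>l. (\<Sum>j\<in>UNIV. W j l) = 1"
  shows "(\<Sum>j\<in>UNIV. (norm (closest_point S (\<Sum>l\<in>UNIV. W j l *\<^sub>R v l) - a))\<^sup>2)
    \<le> (\<Sum>l\<in>UNIV. (norm (v l - a))\<^sup>2)"
proof -
  have "(norm (closest_point S (\<Sum>l\<in>UNIV. W j l *\<^sub>R v l) - a))\<^sup>2
      \<le> (\<Sum>l\<in>UNIV. W j l * (norm (v l - a))\<^sup>2)" for j
  proof -
    have "(\<Sum>l\<in>UNIV. W j l *\<^sub>R v l) - a = (\<Sum>l\<in>UNIV. W j l *\<^sub>R (v l - a))"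
      by (simp add: scaleR_diff_right sum_subtractf scaleR_sum_left[symmetric] W_rows)
    then have "norm (closest_point S (\<Sum>l\<in>UNIV. W j l *\<^sub>R v l) - a)
        \<le> norm (\<Sum>l\<in>UNIV. W j l *\<^sub>R (v l - a))"
      using norm_closest_point_diff_le[OF assms(1-3)] by metis
    then have "(norm (closest_point S (\<Sum>l\<in>UNIV. W j l *\<^sub>R v l) - a))\<^sup>2
        \<le> (norm (\<Sum>l\<in>UNIV. W j l *\<^sub>R (v l - a)))\<^sup>2"
      by (intro power_mono) auto
    also have "\<dots> \<le> (\<Sum>l\<in>UNIV. W j l * (norm (v l - a))\<^sup>2)"
      by (rule power2_norm_convex_comb_le) (auto simp: W_nonneg W_rows)
    finally show ?thesis .
  qed
  then have "(\<Sum>j\<in>UNIV. (norm (closest_point S (\<Sum>l\<in>UNIV. W j l *\<^sub>R v l) - a))\<^sup>2)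
      \<le> (\<Sum>j\<in>UNIV. \<Sum>l\<in>UNIV. W j l * (norm (v l - a))\<^sup>2)"
    by (rule sum_mono)
  also have "\<dots> = (\<Sum>l\<in>UNIV. (norm (v l - a))\<^sup>2)"
    by (subst sum.swap) (simp add: sum_distrib_right[symmetric] W_cols)
  finally show ?thesis .
qed

lemma is_subgrad_on_lower_bound:
  assumes "is_subgrad_on S h x u" "y \<in> S" "norm u \<le> L"
  shows "h x - L * norm (x - y) \<le> h y"
proof -
  have "h x + inner u (y - x) \<le> h y"
    using assms(1,2) unfolding is_subgrad_on_def by blast
  moreover have "- inner u (y - x) \<le> norm u * norm (y - x)"
    using Cauchy_Schwarz_ineq2[of u "y - x"] by linarith
  moreover have "norm u * norm (y - x) \<le> L * norm (x - y)"
    using mult_right_mono[OF assms(3) norm_ge_zero[of "y - x"]] by (simp only: norm_minus_commute)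
  ultimately show ?thesis by linarith
qed

lemma convex_on_weighted_mean_le:
  assumes "convex_on S h" "finite I" "\<And>t. t \<in> I \<Longrightarrow> 0 \<le> w t" "0 < sum w I"
    and "\<And>t. t \<in> I \<Longrightarrow> z t \<in> S"
  shows "sum w I * h ((1 / sum w I) *\<^sub>R (\<Sum>t\<in>I. w t *\<^sub>R z t)) \<le> (\<Sum>t\<in>I. w t * h (z t))"
proof -
  have "I \<noteq> {}" using assms(4) by auto
  have mean: "(1 / sum w I) *\<^sub>R (\<Sum>t\<in>I. w t *\<^sub>R z t) = (\<Sum>t\<in>I. (w t / sum w I) *\<^sub>R z t)"
    by (simp add: scaleR_sum_right)
  have "(\<Sum>t\<in>I. w t / sum w I) = 1"
    using assms(4) by (simp add: sum_divide_distrib[symmetric])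
  then have "h (\<Sum>t\<in>I. (w t / sum w I) *\<^sub>R z t) \<le> (\<Sum>t\<in>I. (w t / sum w I) * h (z t))"
    using assms(3-5) by (intro convex_on_sum[OF assms(2) \<open>I \<noteq> {}\<close> assms(1)]) auto
  then have "sum w I * h (\<Sum>t\<in>I. (w t / sum w I) *\<^sub>R z t)
      \<le> sum w I * (\<Sum>t\<in>I. (w t / sum w I) * h (z t))"
    using assms(4) by (simp only: mult_le_cancel_left_pos)
  also have "\<dots> = (\<Sum>t\<in>I. w t * h (z t))"
    using assms(4) by (simp add: sum_distrib_left)
  finally show ?thesis
    unfolding mean .
qed

lemma sum_convex_on_weighted_mean_gap_le:
  fixes fs :: "'n::finite \<Rightarrow> 'a::real_vector \<Rightarrow> real"
  assumes "\<And>j. convex_on S (fs j)" "finite I" "\<And>t. t \<in> I \<Longrightarrow> 0 \<le> w t" "0 < sum w I"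
    and "\<And>t. t \<in> I \<Longrightarrow> z t \<in> S"
  shows "sum w I * ((\<Sum>j\<in>UNIV. fs j ((1 / sum w I) *\<^sub>R (\<Sum>t\<in>I. w t *\<^sub>R z t))) - (\<Sum>j\<in>UNIV. fs j y))
    \<le> (\<Sum>t\<in>I. w t * (\<Sum>j\<in>UNIV. fs j (z t) - fs j y))"
proof -
  have "sum w I * ((\<Sum>j\<in>UNIV. fs j ((1 / sum w I) *\<^sub>R (\<Sum>t\<in>I. w t *\<^sub>R z t))) - (\<Sum>j\<in>UNIV. fs j y))
      = (\<Sum>j\<in>UNIV. sum w I * fs j ((1 / sum w I) *\<^sub>R (\<Sum>t\<in>I. w t *\<^sub>R z t)) - sum w I * fs j y)"
    by (simp add: sum_subtractf sum_distrib_left right_diff_distrib)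
  also have "\<dots> \<le> (\<Sum>j\<in>UNIV. (\<Sum>t\<in>I. w t * fs j (z t)) - sum w I * fs j y)"
    using convex_on_weighted_mean_le[OF assms(1) assms(2-5)] by (intro sum_mono diff_right_mono)
  also have "\<dots> = (\<Sum>j\<in>UNIV. \<Sum>t\<in>I. w t * fs j (z t)) - (\<Sum>j\<in>UNIV. \<Sum>t\<in>I. w t * fs j y)"
    by (simp add: sum_subtractf sum_distrib_right)
  also have "\<dots> = (\<Sum>t\<in>I. w t * (\<Sum>j\<in>UNIV. fs j (z t) - fs j y))"
    by (simp add: sum.swap[of _ UNIV I] sum_subtractf sum_distrib_left right_diff_distrib)
  finally show ?thesis .
qed

lemma inner_gradLx_ge:
  fixes l :: "real^'m::finite"
  assumes "is_subgrad_on S (fs j) x (gf j x)" "\<And>k. is_subgrad_on S (g k) x (gg k x)"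
    and "y \<in> S" "\<And>k. 0 \<le> l $ k"
  shows "fs j x - fs j y + (\<Sum>k\<in>UNIV. l $ k * (g k x - g k y)) \<le> inner (gradLx gf gg j x l) (x - y)"
proof -
  have "fs j x - fs j y \<le> inner (gf j x) (x - y)"
    using assms(1,3) unfolding is_subgrad_on_def by (force simp: inner_diff_right)
  moreover have "l $ k * (g k x - g k y) \<le> l $ k * inner (gg k x) (x - y)" for k
  proof -
    have "g k x - g k y \<le> inner (gg k x) (x - y)"
      using assms(2)[of k] assms(3) unfolding is_subgrad_on_def by (force simp: inner_diff_right)
    then show ?thesis using assms(4) by (rule mult_left_mono)
  qed
  then have "(\<Sum>k\<in>UNIV. l $ k * (g k x - g k y)) \<le> (\<Sum>k\<in>UNIV. l $ k * inner (gg k x) (x - y))"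
    by (rule sum_mono)
  ultimately show ?thesis
    by (simp add: gradLx_def inner_add_left inner_sum_left)
qed

lemma inner_gradLlam:
  "inner (gradLlam g eta x l) l = (\<Sum>k\<in>UNIV. l $ k * g k x) - eta * (norm l)\<^sup>2"
  by (simp add: gradLlam_def gvec_def inner_vec_def power2_norm_eq_inner algebra_simps
      sum_subtractf sum_distrib_left)

lemma power2_norm_diff_scaleR:
  "(norm (u - c *\<^sub>R v))\<^sup>2 = (norm u)\<^sup>2 - 2 * c * inner v u + c\<^sup>2 * (norm v)\<^sup>2"
  unfolding power2_norm_eq_inner
  by (simp add: inner_diff_left inner_diff_right inner_commute algebra_simps power2_eq_square)

lemma power2_norm_add_scaleR:
  "(norm (u + c *\<^sub>R v))\<^sup>2 = (norm u)\<^sup>2 + 2 * c * inner v u + c\<^sup>2 * (norm v)\<^sup>2"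
  using power2_norm_diff_scaleR[of u "- c" v] by simp

text \<open>The multiplier terms cancel: the primal step contributes
  \<open>-\<Sum>\<^sub>k l\<^sub>k (g\<^sub>k x - g\<^sub>k y)\<close>, the dual step \<open>+\<Sum>\<^sub>k l\<^sub>k g\<^sub>k x\<close>,
  leaving \<open>\<Sum>\<^sub>k l\<^sub>k g\<^sub>k y \<le> 0\<close> by feasibility of \<open>y\<close>.\<close>
lemma primal_dual_step_power2_le:
  fixes l :: "real^'m::finite"
  assumes "is_subgrad_on S (fs j) x (gf j x)" "\<And>k. is_subgrad_on S (g k) x (gg k x)"
    and "y \<in> S" "\<And>k. g k y \<le> 0" "\<And>k. 0 \<le> l $ k" "0 \<le> a"
  shows "(norm (x - a *\<^sub>R gradLx gf gg j x l - y))\<^sup>2 + (norm (l + a *\<^sub>R gradLlam g eta x l))\<^sup>2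
    \<le> (norm (x - y))\<^sup>2 + (norm l)\<^sup>2 - 2 * a * (fs j x - fs j y) - 2 * a * eta * (norm l)\<^sup>2
       + a\<^sup>2 * ((norm (gradLx gf gg j x l))\<^sup>2 + (norm (gradLlam g eta x l))\<^sup>2)"
proof -
  have "fs j x - fs j y + (\<Sum>k\<in>UNIV. l $ k * g k x) - (\<Sum>k\<in>UNIV. l $ k * g k y)
      \<le> inner (gradLx gf gg j x l) (x - y)"
    using inner_gradLx_ge[where fs = fs and gf = gf and g = g and gg = gg and j = j, OF assms(1-3,5)]
    by (simp add: right_diff_distrib sum_subtractf)
  moreover have "(\<Sum>k\<in>UNIV. l $ k * g k y) \<le> 0"
    using assms(4,5) by (intro sum_nonpos) (simp add: mult_nonneg_nonpos)
  ultimately have "inner (gradLlam g eta x l) l - inner (gradLx gf gg j x l) (x - y)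
      \<le> - (fs j x - fs j y) - eta * (norm l)\<^sup>2"
    by (simp add: inner_gradLlam)
  then have "a * (inner (gradLlam g eta x l) l - inner (gradLx gf gg j x l) (x - y))
      \<le> a * (- (fs j x - fs j y) - eta * (norm l)\<^sup>2)"
    using assms(6) by (rule mult_left_mono)
  then show ?thesis
    using power2_norm_diff_scaleR[of "x - y" a "gradLx gf gg j x l"]
      power2_norm_add_scaleR[of l a "gradLlam g eta x l"]
    by (simp add: algebra_simps)
qed

locale distributed_primal_dual =
  fixes fs :: "'n::finite \<Rightarrow> 'a::euclidean_space \<Rightarrow> real"
    and g :: "'m::finite \<Rightarrow> 'a \<Rightarrow> real"
    and gf :: "'n \<Rightarrow> 'a \<Rightarrow> 'a" and gg :: "'m \<Rightarrow> 'a \<Rightarrow> 'a"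
    and W :: "'n \<Rightarrow> 'n \<Rightarrow> real" and \<alpha> :: "nat \<Rightarrow> real"
    and eta R L :: real and xstar :: 'a
  assumes gf_subgrad: "\<And>j x. x \<in> cball 0 R \<Longrightarrow> is_subgrad_on (cball 0 R) (fs j) x (gf j x)"
    and gg_subgrad: "\<And>k x. x \<in> cball 0 R \<Longrightarrow> is_subgrad_on (cball 0 R) (g k) x (gg k x)"
    and gf_bound: "\<And>j x. x \<in> cball 0 R \<Longrightarrow> norm (gf j x) \<le> L"
    and xstar_in_cball: "xstar \<in> cball 0 R"
    and xstar_feasible: "\<And>k. g k xstar \<le> 0"
    and W_nonneg: "\<And>a b. 0 \<le> W a b"
    and W_rows: "\<And>a. (\<Sum>b\<in>UNIV. W a b) = 1"
    and W_cols: "\<And>b. (\<Sum>a\<in>UNIV. W a b) = 1"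
    and alpha_nonneg: "\<And>t. 0 \<le> \<alpha> t"
begin

definition primal :: "nat \<Rightarrow> 'n \<Rightarrow> 'a" where
  "primal t = fst (pd_iter W \<alpha> eta R gf g gg t)"

definition dual :: "nat \<Rightarrow> 'n \<Rightarrow> real^'m" where
  "dual t = snd (pd_iter W \<alpha> eta R gf g gg t)"

abbreviation primal_grad :: "nat \<Rightarrow> 'n \<Rightarrow> 'a" where
  "primal_grad t j \<equiv> gradLx gf gg j (primal t j) (dual t j)"

abbreviation dual_grad :: "nat \<Rightarrow> 'n \<Rightarrow> real^'m" where
  "dual_grad t j \<equiv> gradLlam g eta (primal t j) (dual t j)"

definition potential :: "nat \<Rightarrow> real" where
  "potential t = (\<Sum>j\<in>UNIV. (norm (primal t j - xstar))\<^sup>2 + (norm (dual t j))\<^sup>2)"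

lemma primal_0 [simp]: "primal 0 j = 0"
  by (simp add: primal_def)

lemma dual_0 [simp]: "dual 0 j = 0"
  by (simp add: dual_def)

lemma primal_Suc:
  "primal (Suc t) j = closest_point (cball 0 R) (\<Sum>l\<in>UNIV. W j l *\<^sub>R (primal t l - \<alpha> t *\<^sub>R primal_grad t l))"
  by (simp add: primal_def dual_def Let_def)

lemma dual_Suc:
  "dual (Suc t) j = closest_point nonneg_orthant (\<Sum>l\<in>UNIV. W j l *\<^sub>R (dual t l + \<alpha> t *\<^sub>R dual_grad t l))"
  by (simp add: primal_def dual_def Let_def)

lemma primal_in_cball: "primal t j \<in> cball 0 R"
proof (cases t)
  case 0
  have "norm xstar \<le> R"
    using xstar_in_cball by simp
  then have "0 \<le> R"
    using norm_ge_zero order_trans by blast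
  with 0 show ?thesis by simp
next
  case (Suc s)
  have "cball (0::'a) R \<noteq> {}"
    using xstar_in_cball by blast
  then show ?thesis
    unfolding Suc primal_Suc by (intro closest_point_in_set closed_cball)
qed

lemma dual_nonneg: "0 \<le> dual t j $ k"
proof -
  have "nonneg_orthant \<noteq> {}"
    using zero_in_nonneg_orthant by blast
  then have "dual t j \<in> nonneg_orthant"
    using closest_point_in_set[OF closed_nonneg_orthant]
    by (cases t) (auto simp: dual_Suc zero_in_nonneg_orthant)
  then show ?thesis by (simp add: nonneg_orthant_def)
qed

lemma potential_0: "potential 0 = real CARD('n) * (norm xstar)\<^sup>2"
  by (simp add: potential_def)

lemma potential_nonneg: "0 \<le> potential t"
  unfolding potential_def by (intro sum_nonneg) auto

lemma potential_Suc_le: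
  "potential (Suc t) \<le> (\<Sum>j\<in>UNIV. (norm (primal t j - \<alpha> t *\<^sub>R primal_grad t j - xstar))\<^sup>2
      + (norm (dual t j + \<alpha> t *\<^sub>R dual_grad t j))\<^sup>2)"
proof -
  have "(\<Sum>j\<in>UNIV. (norm (primal (Suc t) j - xstar))\<^sup>2)
      \<le> (\<Sum>j\<in>UNIV. (norm (primal t j - \<alpha> t *\<^sub>R primal_grad t j - xstar))\<^sup>2)"
    unfolding primal_Suc using xstar_in_cball
    by (intro sum_power2_dist_closest_point_mix_le) (auto simp: W_nonneg W_rows W_cols)
  moreover have "(\<Sum>j\<in>UNIV. (norm (dual (Suc t) j))\<^sup>2)
      \<le> (\<Sum>j\<in>UNIV. (norm (dual t j + \<alpha> t *\<^sub>R dual_grad t j))\<^sup>2)"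
    using sum_power2_dist_closest_point_mix_le[OF convex_nonneg_orthant closed_nonneg_orthant
        zero_in_nonneg_orthant W_nonneg W_rows W_cols]
    by (simp add: dual_Suc)
  ultimately show ?thesis
    by (simp add: potential_def sum.distrib)
qed

lemma gap_le_potential_decrease:
  "2 * \<alpha> t * (\<Sum>j\<in>UNIV. fs j (primal t i) - fs j xstar)
    \<le> potential t - potential (Suc t)
       + 2 * L * (\<Sum>j\<in>UNIV. \<alpha> t * norm (primal t i - primal t j))
       - 2 * eta * (\<Sum>j\<in>UNIV. \<alpha> t * (norm (dual t j))\<^sup>2)
       + (\<Sum>j\<in>UNIV. (\<alpha> t)\<^sup>2 * ((norm (primal_grad t j))\<^sup>2 + (norm (dual_grad t j))\<^sup>2))"
proof -
  have agent: "(norm (primal t j - \<alpha> t *\<^sub>R primal_grad t j - xstar))\<^sup>2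
        + (norm (dual t j + \<alpha> t *\<^sub>R dual_grad t j))\<^sup>2
      \<le> (norm (primal t j - xstar))\<^sup>2 + (norm (dual t j))\<^sup>2
        - 2 * \<alpha> t * (fs j (primal t i) - fs j xstar)
        + 2 * L * (\<alpha> t * norm (primal t i - primal t j))
        - 2 * eta * (\<alpha> t * (norm (dual t j))\<^sup>2)
        + (\<alpha> t)\<^sup>2 * ((norm (primal_grad t j))\<^sup>2 + (norm (dual_grad t j))\<^sup>2)" for j
  proof -
    have "fs j (primal t i) - L * norm (primal t i - primal t j) \<le> fs j (primal t j)"
      using is_subgrad_on_lower_bound[OF gf_subgrad[OF primal_in_cball] primal_in_cball
          gf_bound[OF primal_in_cball]] .
    then have "\<alpha> t * (fs j (primal t i) - L * norm (primal t i - primal t j)) \<le> \<alpha> t * fs j (primal t j)"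
      using alpha_nonneg by (rule mult_left_mono)
    moreover have "(norm (primal t j - \<alpha> t *\<^sub>R primal_grad t j - xstar))\<^sup>2
        + (norm (dual t j + \<alpha> t *\<^sub>R dual_grad t j))\<^sup>2
      \<le> (norm (primal t j - xstar))\<^sup>2 + (norm (dual t j))\<^sup>2
        - 2 * \<alpha> t * (fs j (primal t j) - fs j xstar) - 2 * \<alpha> t * eta * (norm (dual t j))\<^sup>2
        + (\<alpha> t)\<^sup>2 * ((norm (primal_grad t j))\<^sup>2 + (norm (dual_grad t j))\<^sup>2)"
      by (intro primal_dual_step_power2_le[where S = "cball 0 R"] gf_subgrad gg_subgrad
          primal_in_cball xstar_in_cball xstar_feasible dual_nonneg alpha_nonneg)
    ultimately show ?thesis by (simp add: algebra_simps)
  qed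
  have "potential (Suc t) \<le> (\<Sum>j\<in>UNIV. (norm (primal t j - xstar))\<^sup>2 + (norm (dual t j))\<^sup>2
        - 2 * \<alpha> t * (fs j (primal t i) - fs j xstar)
        + 2 * L * (\<alpha> t * norm (primal t i - primal t j))
        - 2 * eta * (\<alpha> t * (norm (dual t j))\<^sup>2)
        + (\<alpha> t)\<^sup>2 * ((norm (primal_grad t j))\<^sup>2 + (norm (dual_grad t j))\<^sup>2))"
    using potential_Suc_le by (rule order_trans) (intro sum_mono agent)
  then show ?thesis
    by (simp add: potential_def sum.distrib sum_subtractf flip: sum_distrib_left)
qed

lemma gap_sum_le:
  "2 * (\<Sum>t<T. \<alpha> t * (\<Sum>j\<in>UNIV. fs j (primal t i) - fs j xstar))
    \<le> real CARD('n) * (norm xstar)\<^sup>2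
       + 2 * L * (\<Sum>t<T. \<Sum>j\<in>UNIV. \<alpha> t * norm (primal t i - primal t j))
       - 2 * eta * (\<Sum>t<T. \<Sum>j\<in>UNIV. \<alpha> t * (norm (dual t j))\<^sup>2)
       + (\<Sum>t<T. \<Sum>j\<in>UNIV. (\<alpha> t)\<^sup>2 * ((norm (primal_grad t j))\<^sup>2 + (norm (dual_grad t j))\<^sup>2))"
proof -
  have "2 * (\<Sum>t<T. \<alpha> t * (\<Sum>j\<in>UNIV. fs j (primal t i) - fs j xstar))
      = (\<Sum>t<T. 2 * \<alpha> t * (\<Sum>j\<in>UNIV. fs j (primal t i) - fs j xstar))"
    by (subst sum_distrib_left) (simp add: mult.assoc)
  also have "\<dots> \<le> (\<Sum>t<T. potential t - potential (Suc t)
       + 2 * L * (\<Sum>j\<in>UNIV. \<alpha> t * norm (primal t i - primal t j))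
       - 2 * eta * (\<Sum>j\<in>UNIV. \<alpha> t * (norm (dual t j))\<^sup>2)
       + (\<Sum>j\<in>UNIV. (\<alpha> t)\<^sup>2 * ((norm (primal_grad t j))\<^sup>2 + (norm (dual_grad t j))\<^sup>2)))"
    by (intro sum_mono gap_le_potential_decrease)
  also have "(\<Sum>t<T. potential t - potential (Suc t)
       + 2 * L * (\<Sum>j\<in>UNIV. \<alpha> t * norm (primal t i - primal t j))
       - 2 * eta * (\<Sum>j\<in>UNIV. \<alpha> t * (norm (dual t j))\<^sup>2)
       + (\<Sum>j\<in>UNIV. (\<alpha> t)\<^sup>2 * ((norm (primal_grad t j))\<^sup>2 + (norm (dual_grad t j))\<^sup>2)))
    = potential 0 - potential T
       + 2 * L * (\<Sum>t<T. \<Sum>j\<in>UNIV. \<alpha> t * norm (primal t i - primal t j))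
       - 2 * eta * (\<Sum>t<T. \<Sum>j\<in>UNIV. \<alpha> t * (norm (dual t j))\<^sup>2)
       + (\<Sum>t<T. \<Sum>j\<in>UNIV. (\<alpha> t)\<^sup>2 * ((norm (primal_grad t j))\<^sup>2 + (norm (dual_grad t j))\<^sup>2))"
    using sum_lessThan_telescope'[of potential T]
    by (simp add: sum.distrib sum_subtractf sum_distrib_left)
  finally show ?thesis
    using potential_0 potential_nonneg[of T] by linarith
qed

end

text \<open>The potential argument yields the multiplier term with coefficient \<open>eta / n\<close>; the
  claimed \<open>eta / (2 n)\<close> is weaker, which is why \<open>0 \<le> eta M\<close> is needed.\<close>
lemma gap_bound_rescale:
  fixes A n D gap X L C eta M S :: real
  assumes "0 < A" "0 < n" "0 \<le> eta * M" "A * D \<le> gap / n"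
    and "2 * gap \<le> n * X + 2 * L * C - 2 * eta * M + S"
  shows "D \<le> (1 / A) * ((1 / 2) * X + (L / n) * C - (eta / (2 * n)) * M + (1 / (2 * n)) * S)"
proof -
  have "gap / n \<le> (n * X + 2 * L * C - 2 * eta * M + S) / (2 * n)"
    using divide_right_mono[OF assms(5), of "2 * n"] assms(2) by simp
  also have "\<dots> = (1 / 2) * X + (L / n) * C - (eta / n) * M + (1 / (2 * n)) * S"
    using assms(2) by (simp add: field_simps)
  also have "\<dots> \<le> (1 / 2) * X + (L / n) * C - (eta / (2 * n)) * M + (1 / (2 * n)) * S"
  proof -
    have "0 \<le> (eta * M) / (2 * n)"
      using assms(2,3) by simp
    moreover have "(eta / n) * M = (eta / (2 * n)) * M + (eta * M) / (2 * n)"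
      using assms(2) by (simp add: field_simps)
    ultimately show ?thesis
      by linarith
  qed
  finally show ?thesis
    using assms(1,4) by (simp add: pos_le_divide_eq mult.commute)
qed

theorem lemma1:
  fixes fs :: "'n::finite \<Rightarrow> 'a::euclidean_space \<Rightarrow> real"
    and g :: "'m::finite \<Rightarrow> 'a \<Rightarrow> real"
    and gf :: "'n \<Rightarrow> 'a \<Rightarrow> 'a" and gg :: "'m \<Rightarrow> 'a \<Rightarrow> 'a"
    and X :: "'a set" and R L eta :: real and xstar :: 'a
    and E :: "('n \<times> 'n) set" and W :: "'n \<Rightarrow> 'n \<Rightarrow> real"
    and \<alpha> :: "nat \<Rightarrow> real" and T :: nat and i :: 'n
  defines "f \<equiv> (\<lambda>x. (1 / real CARD('n)) * (\<Sum>j\<in>UNIV. fs j x))"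
  defines "xs \<equiv> (\<lambda>t. fst (pd_iter W \<alpha> eta R gf g gg t))"
  defines "lams \<equiv> (\<lambda>t. snd (pd_iter W \<alpha> eta R gf g gg t))"
  assumes X_def: "X = {x. \<forall>k. g k x \<le> 0}"
    and X_nonempty: "X \<noteq> {}" and X_convex: "convex X" and X_compact: "compact X"
    and R_def: "R = Sup (norm ` X)"
    and slater: "\<exists>xt. \<forall>k. g k xt < 0"
    and f_convex: "\<And>j. convex_on (cball 0 R) (fs j)"
    and g_convex: "\<And>k. convex_on (cball 0 R) (g k)"
    and gf_subgrad: "\<And>j x. x \<in> cball 0 R \<Longrightarrow> is_subgrad_on (cball 0 R) (fs j) x (gf j x)"
    and gg_subgrad: "\<And>k x. x \<in> cball 0 R \<Longrightarrow> is_subgrad_on (cball 0 R) (g k) x (gg k x)"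
    and gf_bound: "\<And>j x. x \<in> cball 0 R \<Longrightarrow> norm (gf j x) \<le> L"
    and gg_bound: "\<And>k x. x \<in> cball 0 R \<Longrightarrow> norm (gg k x) \<le> L"
    and xstar_opt: "xstar \<in> X" "\<And>x. x \<in> X \<Longrightarrow> f xstar \<le> f x"
    and E_sym: "sym E" and E_conn: "\<And>a b. (a, b) \<in> E\<^sup>*"
    and W_nonneg: "\<And>a b. 0 \<le> W a b"
    and W_rows: "\<And>a. (\<Sum>b\<in>UNIV. W a b) = 1"
    and W_cols: "\<And>b. (\<Sum>a\<in>UNIV. W a b) = 1"
    and W_pos: "\<And>a b. (a, b) \<in> E \<Longrightarrow> W a b > 0"
    and W_zero: "\<And>a b. (a, b) \<notin> E \<Longrightarrow> W a b = 0"
    and alpha_nonneg: "\<And>t. 0 \<le> \<alpha> t"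
    and alpha_noninc: "\<And>t. \<alpha> (Suc t) \<le> \<alpha> t"
    and eta_pos: "eta > 0"
    and alpha_sum_pos: "(\<Sum>t<T. \<alpha> t) > 0"
  shows "f ((1 / (\<Sum>t<T. \<alpha> t)) *\<^sub>R (\<Sum>t<T. \<alpha> t *\<^sub>R xs t i)) - f xstar
    \<le> (1 / (\<Sum>t<T. \<alpha> t)) *
       ((1/2) * (norm xstar)\<^sup>2
        + (L / real CARD('n)) * (\<Sum>t<T. \<Sum>j\<in>UNIV. \<alpha> t * norm (xs t i - xs t j))
        - (eta / (2 * real CARD('n))) * (\<Sum>t<T. \<Sum>j\<in>UNIV. \<alpha> t * (norm (lams t j))\<^sup>2)
        + (1 / (2 * real CARD('n))) * (\<Sum>t<T. \<Sum>j\<in>UNIV. (\<alpha> t)\<^sup>2 *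
             ((norm (gradLx gf gg j (xs t j) (lams t j)))\<^sup>2
              + (norm (gradLlam g eta (xs t j) (lams t j)))\<^sup>2)))"
proof -
  let ?n = "real CARD('n)"
  define A where "A = (\<Sum>t<T. \<alpha> t)"
  define xhat where "xhat = (1 / A) *\<^sub>R (\<Sum>t<T. \<alpha> t *\<^sub>R xs t i)"
  define gap where "gap = (\<Sum>t<T. \<alpha> t * (\<Sum>j\<in>UNIV. fs j (xs t i) - fs j xstar))"
  obtain B where "\<And>x. x \<in> X \<Longrightarrow> norm x \<le> B"
    using compact_imp_bounded[OF X_compact] unfolding bounded_iff by blast
  then have xstar_norm: "norm xstar \<le> R"
    unfolding R_def using xstar_opt(1) by (intro cSup_upper bdd_aboveI2[where M = B]) auto
  interpret distributed_primal_dual fs g gf gg W \<alpha> eta R L xstar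
    using xstar_opt(1) unfolding X_def
    by unfold_locales (auto simp: gf_subgrad gg_subgrad gf_bound xstar_norm W_nonneg W_rows
        W_cols alpha_nonneg)
  have iterates: "xs = primal" "lams = dual"
    by (simp_all add: fun_eq_iff xs_def lams_def primal_def dual_def)
  have "A * ((\<Sum>j\<in>UNIV. fs j xhat) - (\<Sum>j\<in>UNIV. fs j xstar)) \<le> gap"
    unfolding xhat_def A_def gap_def iterates
    by (rule sum_convex_on_weighted_mean_gap_le[OF f_convex])
      (use alpha_sum_pos alpha_nonneg primal_in_cball in auto)
  then have "A * ((\<Sum>j\<in>UNIV. fs j xhat) - (\<Sum>j\<in>UNIV. fs j xstar)) / ?n \<le> gap / ?n"
    by (rule divide_right_mono) simp
  then have "A * (f xhat - f xstar) \<le> gap / ?n"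
    by (simp add: f_def right_diff_distrib diff_divide_distrib)
  moreover have "0 \<le> eta * (\<Sum>t<T. \<Sum>j\<in>UNIV. \<alpha> t * (norm (lams t j))\<^sup>2)"
    using eta_pos alpha_nonneg by (intro mult_nonneg_nonneg sum_nonneg) auto
  ultimately show ?thesis
    using alpha_sum_pos gap_sum_le[where T = T and i = i, folded iterates, folded gap_def]
    unfolding A_def[symmetric] xhat_def[symmetric]
    by (intro gap_bound_rescale) (assumption | simp)+
qed

end
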